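(* Let $T$ be a reflection factorization in $G(4,2,2)$ of length $\ell\ge 3$ which contains at least one reflection from each of the conjugacy classes $S_1,S_2,S_3$. Then for any reflection $x$ in $G(4,2,2)$, there is a factorization in the Hurwitz orbit of $T$ whose right-most entry is $x$.
   Context: $G(4,2,2)$ is the group of the sixteen $2\times 2$ complex monomial matrices whose nonzero entries lie in $\{\pm1,\pm i\}$ and whose two nonzero entries multiply to $\pm 1$. A reflection is a matrix whose fixed space in $\mathbb{C}^2$ has dimension $1$. $G(4,2,2)$ contains six reflections, all of order $2$, which split into three conjugacy classes $S_1,S_2,S_3$ of $G(4,2,2)$, each of size $2$. A reflection factorization of length $\ell$ is a tuple $(r_1,\dots,r_\ell)$ of reflections in $G(4,2,2)$. The Hurwitz move $\sigma_i$ sends $(r_1,\dots,r_\ell)$ to $(r_1,\dots,r_{i-1},r_{i+1},r_{i+1}^{-1}r_ir_{i+1},r_{i+2},\dots,r_\ell)$; the Hurwitz orbit of $T$ is the set of factorizations obtained from $T$ by finite sequences of Hurwitz moves. *)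

theory Defs
  imports Complex_Main "Jordan_Normal_Form.Matrix_Kernel" "Jordan_Normal_Form.Gauss_Jordan_Elimination"
begin

definition units4 :: "complex set" where
  "units4 = {1, -1, \<i>, -\<i>}"

definition G422 :: "complex mat set" where
  "G422 = {A. A \<in> carrier_mat 2 2 \<and>
     ((A $$ (0,1) = 0 \<and> A $$ (1,0) = 0 \<and> A $$ (0,0) \<in> units4 \<and> A $$ (1,1) \<in> units4
        \<and> A $$ (0,0) * A $$ (1,1) \<in> {1, -1})
    \<or> (A $$ (0,0) = 0 \<and> A $$ (1,1) = 0 \<and> A $$ (0,1) \<in> units4 \<and> A $$ (1,0) \<in> units4
        \<and> A $$ (0,1) * A $$ (1,0) \<in> {1, -1}))}"

definition reflection422 :: "complex mat \<Rightarrow> bool" where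
  "reflection422 A \<longleftrightarrow> A \<in> G422 \<and> kernel_dim (A - 1\<^sub>m 2) = 1"

definition minv :: "complex mat \<Rightarrow> complex mat" where
  "minv A = the (mat_inverse A)"

definition conj422 :: "complex mat \<Rightarrow> complex mat \<Rightarrow> bool" where
  "conj422 a b \<longleftrightarrow> (\<exists>g\<in>G422. b = minv g * a * g)"

text \<open>Hurwitz move sigma_{i+1} (0-based index i, requires i+1 < length).\<close>
definition hurwitz_move :: "nat \<Rightarrow> complex mat list \<Rightarrow> complex mat list" where
  "hurwitz_move i T = T[i := T ! Suc i, Suc i := minv (T ! Suc i) * T ! i * T ! Suc i]"

definition hurwitz_step :: "complex mat list \<Rightarrow> complex mat list \<Rightarrow> bool" where
  "hurwitz_step T T' \<longleftrightarrow> (\<exists>i. Suc i < length T \<and> T' = hurwitz_move i T)"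

definition hurwitz_orbit :: "complex mat list \<Rightarrow> complex mat list set" where
  "hurwitz_orbit T = {T'. hurwitz_step\<^sup>*\<^sup>* T T'}"

end

theory Submission
  imports Defs
begin

text \<open>
  The six reflections of G(4,2,2) are \<open>\<plusminus>diag(1,-1)\<close>, \<open>\<plusminus>antidiag(1,1)\<close> and
  \<open>\<plusminus>antidiag(\<i>,-\<i>)\<close>; the conjugacy classes are the pairs \<open>{r, -r}\<close>, and conjugating a
  reflection \<open>r\<close> by a reflection \<open>s\<close> gives \<open>r\<close> if \<open>s \<in> {r, -r}\<close> and \<open>-r\<close> otherwise.
  Hence a Hurwitz move only ever changes signs within a class. Sliding an entry of the class of
  \<open>x\<close> to the right end, and an entry of another class just before it, produces a factorization
  ending in \<open>[c, \<plusminus>x]\<close> with \<open>c\<close> not in the class of \<open>x\<close>; two moves on this last pair turn it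
  into \<open>[-c, \<mp>x]\<close>, so the right-most entry can be given either sign.
\<close>

abbreviation mat2 :: "'a \<Rightarrow> 'a \<Rightarrow> 'a \<Rightarrow> 'a \<Rightarrow> 'a mat" where
  "mat2 a b c d \<equiv> mat_of_rows_list 2 [[a, b], [c, d]]"

lemma mat2_carrier [simp]: "mat2 a b c d \<in> carrier_mat 2 2"
  by (simp add: mat_of_rows_list_def numeral_2_eq_2)

(* Stated for symbolic indices because the simplifier rewrites the index 1 to Suc 0. *)
lemma mat2_index [simp]: "i < 2 \<Longrightarrow> j < 2 \<Longrightarrow> mat2 a b c d $$ (i, j) = [[a, b], [c, d]] ! i ! j"
  by (simp add: mat_of_rows_list_def)

lemma mat2_eq_iff [simp]:
  "mat2 a b c d = mat2 a' b' c' d' \<longleftrightarrow> a = a' \<and> b = b' \<and> c = c' \<and> d = d'"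
  by (auto simp: mat_eq_iff mat_of_rows_list_def numeral_2_eq_2 less_Suc_eq)

lemma mat2_of_entries:
  assumes "A \<in> carrier_mat 2 2"
  shows "A = mat2 (A $$ (0, 0)) (A $$ (0, 1)) (A $$ (1, 0)) (A $$ (1, 1))"
  using assms by (auto simp: mat_eq_iff mat_of_rows_list_def numeral_2_eq_2 less_Suc_eq)

lemma one_mat_eq_mat2: "1\<^sub>m 2 = mat2 1 0 0 1"
  by (auto simp: mat_eq_iff mat_of_rows_list_def numeral_2_eq_2 less_Suc_eq)

lemma zero_mat_eq_mat2: "0\<^sub>m 2 2 = mat2 0 0 0 0"
  by (auto simp: mat_eq_iff mat_of_rows_list_def numeral_2_eq_2 less_Suc_eq)

lemma uminus_mat2 [simp]: "- mat2 a b c d = mat2 (- a) (- b) (- c) (- d)"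
  by (auto simp: mat_eq_iff mat_of_rows_list_def numeral_2_eq_2 less_Suc_eq)

lemma minus_mat2 [simp]:
  "mat2 a b c d - mat2 a' b' c' d' = mat2 (a - a') (b - b') (c - c') (d - d')"
  by (auto simp: mat_eq_iff mat_of_rows_list_def numeral_2_eq_2 less_Suc_eq)

lemma times_mat2 [simp]:
  "mat2 a b c d * mat2 a' b' c' d' =
     mat2 (a * a' + b * c') (a * b' + b * d') (c * a' + d * c') (c * b' + d * d')"
  by (auto simp: mat_eq_iff mat_of_rows_list_def numeral_2_eq_2 less_Suc_eq
      scalar_prod_def row_def col_def)

lemma mat2_mult_inverse:
  fixes a b c d :: "'a :: field"
  defines "\<delta> \<equiv> a * d - b * c"
  assumes "\<delta> \<noteq> 0"
  shows "mat2 a b c d * mat2 (d / \<delta>) (- b / \<delta>) (- c / \<delta>) (a / \<delta>) = 1\<^sub>m 2"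
  using assms by (simp add: one_mat_eq_mat2 divide_simps)

lemma minv_eqI:
  fixes A B :: "complex mat"
  assumes A: "A \<in> carrier_mat n n" and B: "B \<in> carrier_mat n n" and AB: "A * B = 1\<^sub>m n"
  shows "minv A = B"
proof -
  have "A \<in> Units (ring_mat TYPE(complex) n ())"
    using A B AB mat_mult_left_right_inverse[OF A B AB] unfolding Units_def ring_mat_def by auto
  then obtain C where C: "mat_inverse A = Some C"
    using mat_inverse(1)[OF A] by fastforce
  then have CA: "C * A = 1\<^sub>m n" and C_carrier: "C \<in> carrier_mat n n"
    using mat_inverse(2)[OF A] by auto
  have "C = C * (A * B)"
    using C_carrier AB by simp
  also have "\<dots> = B"
    using assoc_mult_mat[OF C_carrier A B] CA B by simp
  finally show ?thesis
    using C by (simp add: minv_def)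
qed

lemma kernel_dim_eq_0_of_right_inverse:
  fixes A B :: "'a :: field mat"
  assumes A: "A \<in> carrier_mat n n" and B: "B \<in> carrier_mat n n" and AB: "A * B = 1\<^sub>m n"
  shows "kernel_dim A = 0"
proof -
  have "mat_kernel A = mat_kernel (1\<^sub>m n :: 'a mat)"
    using mat_kernel_mult_eq[OF A B A AB] mat_mult_left_right_inverse[OF A B AB] by simp
  then show ?thesis
    using A kernel_one_mat(1)[of n] by (simp add: kernel_dim_def)
qed

lemma minv_mat2:
  fixes a b c d :: complex
  defines "\<delta> \<equiv> a * d - b * c"
  assumes "\<delta> \<noteq> 0"
  shows "minv (mat2 a b c d) = mat2 (d / \<delta>) (- b / \<delta>) (- c / \<delta>) (a / \<delta>)"
  using assms(2) unfolding \<delta>_def by (rule minv_eqI[OF mat2_carrier mat2_carrier mat2_mult_inverse])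

lemma kernel_dim_mat2_eq_0:
  fixes a b c d :: "'a :: field"
  assumes "a * d - b * c \<noteq> 0"
  shows "kernel_dim (mat2 a b c d) = 0"
  using assms by (rule kernel_dim_eq_0_of_right_inverse[OF mat2_carrier mat2_carrier mat2_mult_inverse])

lemma G422_cases:
  assumes "A \<in> G422"
  obtains (diagonal) p q where "p \<in> units4" "q \<in> units4" "p * q \<in> {1, -1}" "A = mat2 p 0 0 q"
    | (antidiagonal) p q where "p \<in> units4" "q \<in> units4" "p * q \<in> {1, -1}" "A = mat2 0 p q 0"
  using assms mat2_of_entries[of A] unfolding G422_def by (auto simp del: mat2_eq_iff)

definition refl_S1 :: "complex mat" where "refl_S1 = mat2 1 0 0 (-1)"
definition refl_S2 :: "complex mat" where "refl_S2 = mat2 0 1 1 0"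
definition refl_S3 :: "complex mat" where "refl_S3 = mat2 0 \<i> (- \<i>) 0"

lemma kernel_dim_refl_S:
  "kernel_dim (refl_S1 - 1\<^sub>m 2) = 1" "kernel_dim (- refl_S1 - 1\<^sub>m 2) = 1"
  "kernel_dim (refl_S2 - 1\<^sub>m 2) = 1" "kernel_dim (- refl_S2 - 1\<^sub>m 2) = 1"
  "kernel_dim (refl_S3 - 1\<^sub>m 2) = 1" "kernel_dim (- refl_S3 - 1\<^sub>m 2) = 1"
  unfolding refl_S1_def refl_S2_def refl_S3_def by code_simp+

lemma kernel_dim_zero_mat2: "kernel_dim (0\<^sub>m 2 2 :: complex mat) = 2"
  by code_simp

lemma reflection422_iff:
  "reflection422 A \<longleftrightarrow> A \<in> {refl_S1, - refl_S1, refl_S2, - refl_S2, refl_S3, - refl_S3}"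
proof
  assume "reflection422 A"
  then have A: "A \<in> G422" and kd: "kernel_dim (A - 1\<^sub>m 2) = 1"
    unfolding reflection422_def by auto
  from A show "A \<in> {refl_S1, - refl_S1, refl_S2, - refl_S2, refl_S3, - refl_S3}"
  proof (cases rule: G422_cases)
    case (diagonal p q)
    then have "(p - 1) * (q - 1) = 0"
      using kd kernel_dim_mat2_eq_0[where a = "p - 1" and b = 0 and c = 0 and d = "q - 1"]
      by (auto simp: one_mat_eq_mat2)
    moreover have "A \<noteq> 1\<^sub>m 2"
      using kd kernel_dim_zero_mat2 by (auto simp: one_mat_eq_mat2 zero_mat_eq_mat2)
    ultimately show ?thesis
      using diagonal by (auto simp: units4_def refl_S1_def one_mat_eq_mat2)
  next
    case (antidiagonal p q)
    then have "p * q = 1"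
      using kd kernel_dim_mat2_eq_0[where a = "- 1" and b = p and c = q and d = "- 1"]
      by (auto simp: one_mat_eq_mat2)
    then show ?thesis
      using antidiagonal by (auto simp: units4_def refl_S2_def refl_S3_def complex_eq_iff)
  qed
next
  assume "A \<in> {refl_S1, - refl_S1, refl_S2, - refl_S2, refl_S3, - refl_S3}"
  moreover have "{refl_S1, - refl_S1, refl_S2, - refl_S2, refl_S3, - refl_S3} \<subseteq> G422"
    by (auto simp: G422_def units4_def refl_S1_def refl_S2_def refl_S3_def)
  ultimately show "reflection422 A"
    using kernel_dim_refl_S unfolding reflection422_def by auto
qed

lemma reflection422_uminus: "reflection422 r \<Longrightarrow> reflection422 (- r)"
  unfolding reflection422_iff by (elim insertE emptyE) simp_all

lemma reflection422_other_class:
  assumes "reflection422 x"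
  obtains s where "reflection422 s" "s \<notin> {x, - x}"
proof -
  have "refl_S1 \<notin> {x, - x} \<or> refl_S2 \<notin> {x, - x}"
    using assms unfolding reflection422_iff
    by (elim insertE emptyE) (simp_all add: refl_S1_def refl_S2_def refl_S3_def)
  then show ?thesis
    using that reflection422_iff by blast
qed

lemma units4_ne [simp]:
  "\<i> \<noteq> 1" "\<i> \<noteq> -1" "- \<i> \<noteq> 1" "- \<i> \<noteq> -1" "\<i> \<noteq> - \<i>" "(1::complex) \<noteq> -1"
  by (simp_all add: complex_eq_iff)

lemma minv_reflection422:
  assumes "reflection422 s"
  shows "minv s = s"
  using assms unfolding reflection422_iff
  by (auto simp: refl_S1_def refl_S2_def refl_S3_def minv_mat2)

lemma reflection422_conj:
  assumes "reflection422 r" "reflection422 s"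
  shows "minv s * r * s = (if r = s \<or> r = - s then r else - r)"
  using assms unfolding minv_reflection422[OF assms(2)] reflection422_iff
  by (elim insertE emptyE; simp add: refl_S1_def refl_S2_def refl_S3_def)

lemma conj422_reflection422:
  assumes s: "reflection422 s" and "conj422 s r"
  shows "r \<in> {s, - s}"
proof -
  obtain g where "g \<in> G422" and r: "r = minv g * s * g"
    using assms(2) unfolding conj422_def by blast
  then show ?thesis
  proof (cases rule: G422_cases)
    case (diagonal p q)
    from diagonal(1-3) s show ?thesis
      unfolding r diagonal(4) units4_def reflection422_iff
      by (elim insertE emptyE; simp add: refl_S1_def refl_S2_def refl_S3_def minv_mat2)
  next
    case (antidiagonal p q)
    from antidiagonal(1-3) s show ?thesis
      unfolding r antidiagonal(4) units4_def reflection422_iff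
      by (elim insertE emptyE; simp add: refl_S1_def refl_S2_def refl_S3_def minv_mat2)
  qed
qed

lemma uminus_pair_eq:
  fixes a b :: "'a :: group_add mat"
  shows "b \<in> {a, - a} \<Longrightarrow> {b, - b} = {a, - a}"
  by auto

lemma hurwitz_step_at: "hurwitz_step (xs @ a # b # zs) (xs @ b # minv b * a * b # zs)"
  unfolding hurwitz_step_def hurwitz_move_def
  by (rule exI[of _ "length xs"]) (simp add: list_update_append nth_append)

lemma hurwitz_slide:
  assumes "a \<in> C" and "\<And>y c. y \<in> set ys \<Longrightarrow> c \<in> C \<Longrightarrow> minv y * c * y \<in> C"
  shows "\<exists>b\<in>C. hurwitz_step\<^sup>*\<^sup>* (xs @ a # ys @ zs) (xs @ ys @ b # zs)"
  using assms
proof (induction ys arbitrary: xs a)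
  case Nil
  show ?case
    using Nil.prems(1) by (intro bexI[of _ a]) simp_all
next
  case (Cons y ys)
  have "minv y * a * y \<in> C"
    using Cons.prems by simp
  moreover have "\<And>y' c. y' \<in> set ys \<Longrightarrow> c \<in> C \<Longrightarrow> minv y' * c * y' \<in> C"
    using Cons.prems(2) by simp
  ultimately obtain b where "b \<in> C"
    and "hurwitz_step\<^sup>*\<^sup>* ((xs @ [y]) @ minv y * a * y # ys @ zs) ((xs @ [y]) @ ys @ b # zs)"
    using Cons.IH by blast
  moreover have "hurwitz_step (xs @ a # (y # ys) @ zs) ((xs @ [y]) @ minv y * a * y # ys @ zs)"
    using hurwitz_step_at[of xs a y "ys @ zs"] by simp
  ultimately show ?case
    by (intro bexI[of _ b]) (simp_all add: converse_rtranclp_into_rtranclp)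
qed

lemma hurwitz_slide_reflection:
  assumes "reflection422 r" and "\<forall>y\<in>set ys. reflection422 y"
  shows "\<exists>b\<in>{r, - r}. hurwitz_step\<^sup>*\<^sup>* (xs @ r # ys @ zs) (xs @ ys @ b # zs)"
proof (rule hurwitz_slide)
  fix y c
  assume "y \<in> set ys" and "c \<in> {r, - r}"
  then show "minv y * c * y \<in> {r, - r}"
    using assms reflection422_conj[of c y] reflection422_uminus by auto
qed simp

lemma hurwitz_slide_pair_to_end:
  assumes refl: "\<forall>y\<in>set T. reflection422 y"
    and "r \<in> set T" "r' \<in> set T" "r' \<notin> {r, - r}"
  obtains zs b c where "hurwitz_step\<^sup>*\<^sup>* T (zs @ [c, b])" "b \<in> {r, - r}" "c \<in> {r', - r'}"
proof -
  obtain us vs where T: "T = us @ r # vs"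
    using split_list[OF assms(2)] by blast
  obtain b where b: "b \<in> {r, - r}" and T_b: "hurwitz_step\<^sup>*\<^sup>* T (us @ vs @ [b])"
    using hurwitz_slide_reflection[of r vs us "[]"] refl unfolding T by auto
  have "r' \<in> set (us @ vs)"
    using assms(3,4) unfolding T by auto
  then obtain us' vs' where us_vs: "us @ vs = us' @ r' # vs'"
    by (meson split_list)
  have "set (r' # vs') \<subseteq> set (us @ vs)"
    unfolding us_vs by auto
  also have "\<dots> \<subseteq> set T"
    unfolding T by auto
  finally have "\<forall>y\<in>set (r' # vs'). reflection422 y"
    using refl by blast
  then obtain c where c: "c \<in> {r', - r'}"
    and c_b: "hurwitz_step\<^sup>*\<^sup>* (us' @ r' # vs' @ [b]) (us' @ vs' @ [c, b])"
    using hurwitz_slide_reflection[of r' vs' us' "[b]"] by auto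
  have "us @ vs @ [b] = us' @ r' # vs' @ [b]"
    using arg_cong[OF us_vs, of "\<lambda>l. l @ [b]"] by simp
  with T_b c_b have "hurwitz_step\<^sup>*\<^sup>* T ((us' @ vs') @ [c, b])"
    by (metis append_assoc rtranclp_trans)
  then show thesis
    using that b c by blast
qed

lemma hurwitz_negate_last_pair:
  assumes "reflection422 b" "reflection422 c" "c \<notin> {b, - b}"
  shows "hurwitz_step\<^sup>*\<^sup>* (xs @ [c, b]) (xs @ [- c, - b])"
proof -
  have "b \<noteq> - c"
    using assms(3) by (metis insertCI uminus_uminus_mat)
  have "minv b * c * b = - c"
    using reflection422_conj[OF assms(2,1)] assms(3) by simp
  moreover have "minv (- c) * b * - c = - b"
    using reflection422_conj[OF assms(1) reflection422_uminus[OF assms(2)]] assms(3) \<open>b \<noteq> - c\<close>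
    by auto
  ultimately show ?thesis
    using hurwitz_step_at[of xs c b "[]"] hurwitz_step_at[of xs b "- c" "[]"]
    by (metis append_Cons append_Nil r_into_rtranclp rtranclp.rtrancl_into_rtrancl)
qed

lemma hurwitz_orbit_last_reflection:
  assumes refl: "\<forall>y\<in>set T. reflection422 y"
    and "r \<in> set T" "r' \<in> set T" "r' \<notin> {r, - r}" "x \<in> {r, - r}"
  shows "\<exists>T'\<in>hurwitz_orbit T. last T' = x"
proof -
  obtain zs b c where T_cb: "hurwitz_step\<^sup>*\<^sup>* T (zs @ [c, b])"
    and b: "b \<in> {r, - r}" and c: "c \<in> {r', - r'}"
    using hurwitz_slide_pair_to_end[OF assms(1-4)] by blast
  have "reflection422 b" "reflection422 c"
    using b c refl assms(2,3) reflection422_uminus by blast+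
  moreover have b_class: "{b, - b} = {r, - r}"
    using b by (rule uminus_pair_eq)
  moreover have c_class: "{c, - c} = {r', - r'}"
    using c by (rule uminus_pair_eq)
  moreover have "c \<notin> {b, - b}"
  proof
    assume "c \<in> {b, - b}"
    then have "{c, - c} = {b, - b}"
      by (rule uminus_pair_eq)
    then have "r' \<in> {r, - r}"
      using b_class c_class by (metis insertI1)
    with assms(4) show False ..
  qed
  ultimately have T_neg: "hurwitz_step\<^sup>*\<^sup>* T (zs @ [- c, - b])"
    using rtranclp_trans[OF T_cb hurwitz_negate_last_pair] by blast
  have "x = b \<or> x = - b"
    using assms(5) unfolding b_class[symmetric] by simp
  then show ?thesis
  proof
    assume "x = b"
    then show ?thesis
      using T_cb unfolding hurwitz_orbit_def by (intro bexI[of _ "zs @ [c, b]"]) simp_all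
  next
    assume "x = - b"
    then show ?thesis
      using T_neg unfolding hurwitz_orbit_def by (intro bexI[of _ "zs @ [- c, - b]"]) simp_all
  qed
qed

theorem proposition3p8:
  fixes T :: "complex mat list" and x :: "complex mat"
  assumes "\<forall>r\<in>set T. reflection422 r"
    and "length T \<ge> 3"
    and "\<forall>s. reflection422 s \<longrightarrow> (\<exists>r\<in>set T. conj422 s r)"
    and "reflection422 x"
  shows "\<exists>T'\<in>hurwitz_orbit T. last T' = x"
proof -
  obtain r where "r \<in> set T" and r: "{r, - r} = {x, - x}"
    using assms(3,4) conj422_reflection422 uminus_pair_eq by blast
  obtain s where s: "reflection422 s" "s \<notin> {x, - x}"
    using reflection422_other_class[OF assms(4)] .
  then obtain r' where "r' \<in> set T" and r': "{r', - r'} = {s, - s}"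
    using assms(3) conj422_reflection422 uminus_pair_eq by blast
  have "r' \<notin> {r, - r}"
    using r r' s(2) uminus_pair_eq by (metis insertI1)
  moreover have "x \<in> {r, - r}"
    using r by simp
  ultimately show ?thesis
    using hurwitz_orbit_last_reflection assms(1) \<open>r \<in> set T\<close> \<open>r' \<in> set T\<close> by blast
qed

end
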